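(* Consider any correlated multi-secret sharing scheme $p_{M_{12}M_{23}M_{31}|XYZ}$ for a joint distribution $p_{XYZ}$ with full support on $\mathcal X\times\mathcal Y\times\mathcal Z$. Then (1) $H(M_{12})\ge\max\{\sup_{p_{X'Y'Z'}}(RI(X';Z')+H(X',Y'|Z')),\ \sup_{p_{X'Y'Z'}}(RI(Y';Z')+H(X',Y'|Z'))\}$, where the suprema are over distributions $p_{X'Y'Z'}$ for which the characteristic bipartite graph of $p_{X'Y'}$ is connected; (2) $H(M_{23})\ge\max\{\sup_{p_{X'Y'Z'}}(RI(X';Z')+H(Y',Z'|X')),\ \sup_{p_{X'Y'Z'}}(RI(X';Y')+H(Y',Z'|X'))\}$, where the suprema are over distributions $p_{X'Y'Z'}$ for which the characteristic bipartite graph of $p_{Y'Z'}$ is connected; (3) $H(M_{31})\ge\max\{\sup_{p_{X'Y'Z'}}(RI(Y';Z')+H(X',Z'|Y')),\ \sup_{p_{X'Y'Z'}}(RI(X';Y')+H(X',Z'|Y'))\}$, where the suprema are over distributions $p_{X'Y'Z'}$ for which the characteristic bipartite graph of $p_{X'Z'}$ is connected. The left-hand sides are computed under $p_{XYZ}$ and the scheme; the right-hand sides are computed under $p_{X'Y'Z'}$.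
   Context: A correlated multi-secret sharing (CMSS) scheme for a joint distribution $p_{XYZ}$ on finite sets is a conditional distribution $p_{M_{12}M_{23}M_{31}|XYZ}$ mapping secrets $(X,Y,Z)\sim p_{XYZ}$ probabilistically to shares $(M_{12},M_{23},M_{31})$ such that (correctness) $H(X|M_{12},M_{31})=H(Y|M_{12},M_{23})=H(Z|M_{23},M_{31})=0$ and (privacy) $I((M_{12},M_{31});(Y,Z)|X)=0$, $I((M_{12},M_{23});(X,Z)|Y)=0$, $I((M_{23},M_{31});(X,Y)|Z)=0$. The characteristic bipartite graph of a distribution $p_{UV}$ on $\mathcal U\times\mathcal V$ has vertex set $\mathcal U\cup\mathcal V$ with $u,v$ adjacent iff $p_{UV}(u,v)>0$. Residual information: $RI(U;V)=I(U;V)-H(U\sqcap V)$, where $U\sqcap V$ has maximum entropy among random variables of the form $f(U)=g(V)$ for deterministic $f,g$. *)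

theory Defs
  imports Complex_Main
begin

definition is_pmf :: "('o::finite \<Rightarrow> real) \<Rightarrow> bool" where
  "is_pmf P \<longleftrightarrow> (\<forall>w. 0 \<le> P w) \<and> sum P UNIV = 1"

definition marg :: "('o::finite \<Rightarrow> real) \<Rightarrow> ('o \<Rightarrow> 'v) \<Rightarrow> 'v \<Rightarrow> real" where
  "marg P f v = sum P {w. f w = v}"

text \<open>Shannon entropy (base 2) of the random variable f under P (0 log 0 = 0, as log 2 0 = 0).\<close>
definition ent :: "('o::finite \<Rightarrow> real) \<Rightarrow> ('o \<Rightarrow> 'v) \<Rightarrow> real" where
  "ent P f = - (\<Sum>v\<in>f ` UNIV. marg P f v * log 2 (marg P f v))"

definition cond_ent :: "('o::finite \<Rightarrow> real) \<Rightarrow> ('o \<Rightarrow> 'v) \<Rightarrow> ('o \<Rightarrow> 'w) \<Rightarrow> real" where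
  "cond_ent P f g = ent P (\<lambda>w. (f w, g w)) - ent P g"

definition mut_inf :: "('o::finite \<Rightarrow> real) \<Rightarrow> ('o \<Rightarrow> 'v) \<Rightarrow> ('o \<Rightarrow> 'w) \<Rightarrow> real" where
  "mut_inf P f g = ent P f + ent P g - ent P (\<lambda>w. (f w, g w))"

definition cond_mut_inf :: "('o::finite \<Rightarrow> real) \<Rightarrow> ('o \<Rightarrow> 'v) \<Rightarrow> ('o \<Rightarrow> 'w) \<Rightarrow> ('o \<Rightarrow> 'u) \<Rightarrow> real" where
  "cond_mut_inf P f g k = ent P (\<lambda>w. (f w, k w)) + ent P (\<lambda>w. (g w, k w))
                          - ent P (\<lambda>w. (f w, g w, k w)) - ent P k"

definition common_inf :: "('o::finite \<Rightarrow> real) \<Rightarrow> ('o \<Rightarrow> 'u) \<Rightarrow> ('o \<Rightarrow> 'v) \<Rightarrow> real" where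
  "common_inf P U V = Sup {ent P (\<lambda>w. f (U w)) | (f :: 'u \<Rightarrow> nat) (g :: 'v \<Rightarrow> nat).
                             \<forall>w. 0 < P w \<longrightarrow> f (U w) = g (V w)}"

definition res_inf :: "('o::finite \<Rightarrow> real) \<Rightarrow> ('o \<Rightarrow> 'u) \<Rightarrow> ('o \<Rightarrow> 'v) \<Rightarrow> real" where
  "res_inf P U V = mut_inf P U V - common_inf P U V"

text \<open>Characteristic bipartite graph of a joint pmf q on 'u \<times> 'v: vertex set 'u + 'v
  (disjoint union of the alphabets), u ~ v iff q(u,v) > 0. Connectedness.\<close>
definition char_adj :: "('u \<times> 'v \<Rightarrow> real) \<Rightarrow> ('u + 'v) \<Rightarrow> ('u + 'v) \<Rightarrow> bool" where
  "char_adj q a b \<longleftrightarrow> (\<exists>u v. ((a = Inl u \<and> b = Inr v) \<or> (a = Inr v \<and> b = Inl u)) \<and> 0 < q (u, v))"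

definition char_graph_connected :: "('u \<times> 'v \<Rightarrow> real) \<Rightarrow> bool" where
  "char_graph_connected q \<longleftrightarrow> (\<forall>a b. (char_adj q)\<^sup>*\<^sup>* a b)"

text \<open>Secrets (X,Y,Z) and shares (M12,M23,M31): outcomes ((x,y,z),(m12,m23,m31)).\<close>
definition joint :: "('x \<times> 'y \<times> 'z \<Rightarrow> real) \<Rightarrow> ('x \<times> 'y \<times> 'z \<Rightarrow> 'a \<times> 'b \<times> 'c \<Rightarrow> real)
                      \<Rightarrow> ('x \<times> 'y \<times> 'z) \<times> ('a \<times> 'b \<times> 'c) \<Rightarrow> real" where
  "joint p q = (\<lambda>(s, m). p s * q s m)"

definition sX :: "('x \<times> 'y \<times> 'z) \<times> ('a \<times> 'b \<times> 'c) \<Rightarrow> 'x" where "sX w = fst (fst w)"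
definition sY :: "('x \<times> 'y \<times> 'z) \<times> ('a \<times> 'b \<times> 'c) \<Rightarrow> 'y" where "sY w = fst (snd (fst w))"
definition sZ :: "('x \<times> 'y \<times> 'z) \<times> ('a \<times> 'b \<times> 'c) \<Rightarrow> 'z" where "sZ w = snd (snd (fst w))"
definition m12 :: "('x \<times> 'y \<times> 'z) \<times> ('a \<times> 'b \<times> 'c) \<Rightarrow> 'a" where "m12 w = fst (snd w)"
definition m23 :: "('x \<times> 'y \<times> 'z) \<times> ('a \<times> 'b \<times> 'c) \<Rightarrow> 'b" where "m23 w = fst (snd (snd w))"
definition m31 :: "('x \<times> 'y \<times> 'z) \<times> ('a \<times> 'b \<times> 'c) \<Rightarrow> 'c" where "m31 w = snd (snd (snd w))"

text \<open>CMSS scheme q for p (conditional pmf of shares given secrets; correctness; privacy).\<close>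
definition is_CMSS :: "('x::finite \<times> 'y::finite \<times> 'z::finite \<Rightarrow> real)
     \<Rightarrow> ('x \<times> 'y \<times> 'z \<Rightarrow> 'a::finite \<times> 'b::finite \<times> 'c::finite \<Rightarrow> real) \<Rightarrow> bool" where
  "is_CMSS p q \<longleftrightarrow>
     (\<forall>s. is_pmf (q s)) \<and>
     (let P = joint p q in
       cond_ent P sX (\<lambda>w. (m12 w, m31 w)) = 0 \<and>
       cond_ent P sY (\<lambda>w. (m12 w, m23 w)) = 0 \<and>
       cond_ent P sZ (\<lambda>w. (m23 w, m31 w)) = 0 \<and>
       cond_mut_inf P (\<lambda>w. (m12 w, m31 w)) (\<lambda>w. (sY w, sZ w)) sX = 0 \<and>
       cond_mut_inf P (\<lambda>w. (m12 w, m23 w)) (\<lambda>w. (sX w, sZ w)) sY = 0 \<and>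
       cond_mut_inf P (\<lambda>w. (m23 w, m31 w)) (\<lambda>w. (sX w, sY w)) sZ = 0)"

definition margXY :: "('x \<times> 'y \<times> 'z::finite \<Rightarrow> real) \<Rightarrow> 'x \<times> 'y \<Rightarrow> real" where
  "margXY p = (\<lambda>(x, y). \<Sum>z\<in>UNIV. p (x, y, z))"
definition margYZ :: "('x::finite \<times> 'y \<times> 'z \<Rightarrow> real) \<Rightarrow> 'y \<times> 'z \<Rightarrow> real" where
  "margYZ p = (\<lambda>(y, z). \<Sum>x\<in>UNIV. p (x, y, z))"
definition margXZ :: "('x \<times> 'y::finite \<times> 'z \<Rightarrow> real) \<Rightarrow> 'x \<times> 'z \<Rightarrow> real" where
  "margXZ p = (\<lambda>(x, z). \<Sum>y\<in>UNIV. p (x, y, z))"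

definition pX :: "'x \<times> 'y \<times> 'z \<Rightarrow> 'x" where "pX t = fst t"
definition pY :: "'x \<times> 'y \<times> 'z \<Rightarrow> 'y" where "pY t = fst (snd t)"
definition pZ :: "'x \<times> 'y \<times> 'z \<Rightarrow> 'z" where "pZ t = snd (snd t)"

end

theory Submission
  imports Defs
begin

text \<open>By correctness every pair of shares determines a secret on the support, and by
  privacy, combined with the full support of \<open>p\<close>, the conditional law of a pair of shares given
  the secrets depends only on the one secret this pair determines. Hence the law of each single share
  does not depend on the secrets at all, so \<open>H(M\<^sub>1\<^sub>2)\<close> is the same when the scheme is fed with any
  other distribution \<open>p'\<close> of the secrets. Under \<open>p'\<close> the Shannon inequalities give
  \<open>H(M\<^sub>1\<^sub>2) \<ge> H(X) + H(Y | X, Z) = I(X;Z) + H(X,Y | Z)\<close>, and residual information never exceeds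
  mutual information.\<close>

definition atom_prob :: "('o::finite \<Rightarrow> real) \<Rightarrow> ('o \<Rightarrow> 'v) \<Rightarrow> 'o \<Rightarrow> real" where
  "atom_prob P f w = (\<Sum>w'\<in>UNIV. if f w' = f w then P w' else 0)"

lemma atom_prob_eq_marg: "atom_prob P f w = marg P f (f w)"
  unfolding atom_prob_def marg_def by (simp add: sum.inter_filter[symmetric])

lemma ent_eq_expectation: "ent P f = - (\<Sum>w\<in>UNIV. P w * log 2 (atom_prob P f w))"
proof -
  have "marg P f v * log 2 (marg P f v) = (\<Sum>w\<in>{w \<in> UNIV. f w = v}. P w * log 2 (atom_prob P f w))"
    for v
  proof -
    have "(\<Sum>w\<in>{w \<in> UNIV. f w = v}. P w * log 2 (atom_prob P f w))
        = (\<Sum>w\<in>{w. f w = v}. P w * log 2 (marg P f v))"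
      by (rule sum.cong) (auto simp: atom_prob_eq_marg)
    then show ?thesis by (simp add: marg_def sum_distrib_right)
  qed
  then have "(\<Sum>v\<in>f ` UNIV. marg P f v * log 2 (marg P f v))
      = (\<Sum>v\<in>f ` UNIV. \<Sum>w\<in>{w \<in> UNIV. f w = v}. P w * log 2 (atom_prob P f w))"
    by simp
  also have "\<dots> = (\<Sum>w\<in>UNIV. P w * log 2 (atom_prob P f w))"
    by (rule sum.group) auto
  finally show ?thesis unfolding ent_def by simp
qed

lemma atom_prob_ge: "\<forall>w. 0 \<le> P w \<Longrightarrow> P w \<le> atom_prob P f w"
  unfolding atom_prob_eq_marg marg_def by (rule member_le_sum) auto

lemma atom_prob_nonneg: "\<forall>w. 0 \<le> P w \<Longrightarrow> 0 \<le> atom_prob P f w"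
  unfolding atom_prob_def by (intro sum_nonneg) auto

lemma ent_cong_on_support:
  assumes nonneg: "\<forall>w. 0 \<le> P w"
    and same_partition: "\<And>w w'. 0 < P w \<Longrightarrow> 0 < P w' \<Longrightarrow> (f w = f w') = (h w = h w')"
  shows "ent P f = ent P h"
proof -
  have "P w * log 2 (atom_prob P f w) = P w * log 2 (atom_prob P h w)" for w
  proof (cases "0 < P w")
    case True
    have "atom_prob P f w = atom_prob P h w" unfolding atom_prob_def
    proof (rule sum.cong[OF refl])
      fix w'
      show "(if f w' = f w then P w' else 0) = (if h w' = h w then P w' else 0)"
        using same_partition[OF _ True, of w'] nonneg[rule_format, of w'] by (cases "0 < P w'") auto
    qed
    then show ?thesis by simp
  next
    case False
    then have "P w = 0" using nonneg[rule_format, of w] by linarith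
    then show ?thesis by simp
  qed
  then have "(\<Sum>w\<in>UNIV. P w * log 2 (atom_prob P f w)) = (\<Sum>w\<in>UNIV. P w * log 2 (atom_prob P h w))"
    by (intro sum.cong) auto
  then show ?thesis unfolding ent_eq_expectation by simp
qed

lemma ent_const: "is_pmf P \<Longrightarrow> ent P (\<lambda>w. c) = 0"
  by (simp add: ent_eq_expectation atom_prob_def is_pmf_def)

section \<open>Conditional mutual information\<close>

text \<open>Gibbs' inequality for conditional mutual information: on the support,
  \<open>ln 2 \<cdot> I(F;G|K) = \<Sum> P (\<rho> - 1 - ln \<rho>) + (1 - \<Sum> P \<rho>)\<close> with
  \<open>\<rho> = P(F,K) P(G,K) / (P(F,G,K) P(K))\<close>, and both summands are nonnegative.\<close>

locale cond_mut_inf_gibbs =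
  fixes P :: "'o::finite \<Rightarrow> real" and F :: "'o \<Rightarrow> 'f" and G :: "'o \<Rightarrow> 'g" and K :: "'o \<Rightarrow> 'k"
  assumes pmf: "is_pmf P"
begin

definition "pFK w = atom_prob P (\<lambda>w. (F w, K w)) w"
definition "pGK w = atom_prob P (\<lambda>w. (G w, K w)) w"
definition "pFGK w = atom_prob P (\<lambda>w. (F w, G w, K w)) w"
definition "pK w = atom_prob P K w"
definition "pFG_K w1 w2 = (\<Sum>w\<in>UNIV. if F w = F w1 \<and> G w = G w2 \<and> K w = K w1 then P w else 0)"
definition "ratio w = pFK w * pGK w / (pFGK w * pK w)"
definition "gap w = P w * (ratio w - 1 - ln (ratio w))"

lemma nonneg: "\<forall>w. 0 \<le> P w"
  using pmf by (simp add: is_pmf_def)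

lemma atom_probs_pos:
  assumes "0 < P w" shows "0 < pFK w" "0 < pGK w" "0 < pFGK w" "0 < pK w"
  using atom_prob_ge[OF nonneg] assms unfolding pFK_def pGK_def pFGK_def pK_def
  by (meson less_le_trans)+

lemma weighted_ratio_eq:
  "P w * ratio w = (\<Sum>w1\<in>UNIV. \<Sum>w2\<in>UNIV.
     if F w1 = F w \<and> K w1 = K w \<and> G w2 = G w \<and> K w2 = K w then P w * P w1 * P w2 / (pFGK w * pK w) else 0)"
proof -
  have "pFK w * pGK w = (\<Sum>w1\<in>UNIV. \<Sum>w2\<in>UNIV.
      (if F w1 = F w \<and> K w1 = K w then P w1 else 0) * (if G w2 = G w \<and> K w2 = K w then P w2 else 0))"
    unfolding pFK_def pGK_def atom_prob_def by (simp add: sum_product)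
  then have "P w * ratio w = (P w / (pFGK w * pK w)) * (\<Sum>w1\<in>UNIV. \<Sum>w2\<in>UNIV.
      (if F w1 = F w \<and> K w1 = K w then P w1 else 0) * (if G w2 = G w \<and> K w2 = K w then P w2 else 0))"
    unfolding ratio_def by simp
  also have "\<dots> = (\<Sum>w1\<in>UNIV. \<Sum>w2\<in>UNIV. (P w / (pFGK w * pK w)) *
      ((if F w1 = F w \<and> K w1 = K w then P w1 else 0) * (if G w2 = G w \<and> K w2 = K w then P w2 else 0)))"
    by (simp add: sum_distrib_left)
  also have "\<dots> = (\<Sum>w1\<in>UNIV. \<Sum>w2\<in>UNIV.
     if F w1 = F w \<and> K w1 = K w \<and> G w2 = G w \<and> K w2 = K w then P w * P w1 * P w2 / (pFGK w * pK w) else 0)"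
    by (intro sum.cong) auto
  finally show ?thesis .
qed

lemma sum_over_common_atom:
  "(\<Sum>w\<in>UNIV. if F w1 = F w \<and> K w1 = K w \<and> G w2 = G w \<and> K w2 = K w
      then P w * P w1 * P w2 / (pFGK w * pK w) else 0)
   = (if K w1 = K w2 \<and> pFG_K w1 w2 \<noteq> 0 then P w1 * P w2 / pK w1 else 0)"
proof -
  have "(\<Sum>w\<in>UNIV. if F w1 = F w \<and> K w1 = K w \<and> G w2 = G w \<and> K w2 = K w
      then P w * P w1 * P w2 / (pFGK w * pK w) else 0)
    = (\<Sum>w\<in>UNIV. (if K w1 = K w2 then P w1 * P w2 / (pFG_K w1 w2 * pK w1) else 0)
                 * (if F w = F w1 \<and> G w = G w2 \<and> K w = K w1 then P w else 0))"
  proof (rule sum.cong[OF refl])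
    fix w
    show "(if F w1 = F w \<and> K w1 = K w \<and> G w2 = G w \<and> K w2 = K w
        then P w * P w1 * P w2 / (pFGK w * pK w) else 0)
      = (if K w1 = K w2 then P w1 * P w2 / (pFG_K w1 w2 * pK w1) else 0)
        * (if F w = F w1 \<and> G w = G w2 \<and> K w = K w1 then P w else 0)"
    proof (cases "F w1 = F w \<and> K w1 = K w \<and> G w2 = G w \<and> K w2 = K w")
      case True
      then have "pFGK w = pFG_K w1 w2" unfolding pFGK_def pFG_K_def atom_prob_def
        by (intro sum.cong) auto
      moreover have "pK w = pK w1" using True unfolding pK_def atom_prob_def by simp
      ultimately show ?thesis using True by simp
    qed auto
  qed
  also have "\<dots> = (if K w1 = K w2 then P w1 * P w2 / (pFG_K w1 w2 * pK w1) else 0) * pFG_K w1 w2"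
    unfolding pFG_K_def by (simp add: sum_distrib_left)
  also have "\<dots> = (if K w1 = K w2 \<and> pFG_K w1 w2 \<noteq> 0 then P w1 * P w2 / pK w1 else 0)"
    by auto
  finally show ?thesis .
qed

lemma expected_ratio_eq:
  "(\<Sum>w\<in>UNIV. P w * ratio w)
   = (\<Sum>w1\<in>UNIV. \<Sum>w2\<in>UNIV. if K w1 = K w2 \<and> pFG_K w1 w2 \<noteq> 0 then P w1 * P w2 / pK w1 else 0)"
proof -
  have "(\<Sum>w\<in>UNIV. P w * ratio w) = (\<Sum>w\<in>UNIV. \<Sum>w1\<in>UNIV. \<Sum>w2\<in>UNIV.
     if F w1 = F w \<and> K w1 = K w \<and> G w2 = G w \<and> K w2 = K w then P w * P w1 * P w2 / (pFGK w * pK w) else 0)"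
    by (simp only: weighted_ratio_eq)
  also have "\<dots> = (\<Sum>w1\<in>UNIV. \<Sum>w2\<in>UNIV. \<Sum>w\<in>UNIV.
     if F w1 = F w \<and> K w1 = K w \<and> G w2 = G w \<and> K w2 = K w then P w * P w1 * P w2 / (pFGK w * pK w) else 0)"
    by (subst sum.swap) (intro sum.cong refl sum.swap)
  also have "\<dots> = (\<Sum>w1\<in>UNIV. \<Sum>w2\<in>UNIV. if K w1 = K w2 \<and> pFG_K w1 w2 \<noteq> 0 then P w1 * P w2 / pK w1 else 0)"
    by (simp only: sum_over_common_atom)
  finally show ?thesis .
qed

lemma sum_same_K_eq_1: "(\<Sum>w1\<in>UNIV. \<Sum>w2\<in>UNIV. if K w1 = K w2 then P w1 * P w2 / pK w1 else 0) = 1"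
proof -
  have "(\<Sum>w2\<in>UNIV. if K w1 = K w2 then P w1 * P w2 / pK w1 else 0) = P w1" for w1
  proof -
    have "(\<Sum>w2\<in>UNIV. if K w1 = K w2 then P w1 * P w2 / pK w1 else 0) = (P w1 / pK w1) * pK w1"
      unfolding pK_def atom_prob_def by (auto simp: sum_distrib_left intro!: sum.cong)
    also have "\<dots> = P w1"
    proof (cases "pK w1 = 0")
      case True
      then have "P w1 = 0" using atom_prob_ge[OF nonneg, of w1 K] nonneg unfolding pK_def
        by (metis order_antisym)
      then show ?thesis by simp
    qed simp
    finally show ?thesis .
  qed
  then show ?thesis using pmf by (simp add: is_pmf_def)
qed

lemma expected_ratio_le_1: "(\<Sum>w\<in>UNIV. P w * ratio w) \<le> 1"
proof -
  have "(\<Sum>w1\<in>UNIV. \<Sum>w2\<in>UNIV. if K w1 = K w2 \<and> pFG_K w1 w2 \<noteq> 0 then P w1 * P w2 / pK w1 else 0)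
     \<le> (\<Sum>w1\<in>UNIV. \<Sum>w2\<in>UNIV. if K w1 = K w2 then P w1 * P w2 / pK w1 else 0)"
    using nonneg atom_prob_nonneg[OF nonneg] unfolding pK_def
    by (intro sum_mono) (auto intro!: divide_nonneg_nonneg)
  then show ?thesis using expected_ratio_eq sum_same_K_eq_1 by simp
qed

lemma gap_nonneg: "0 \<le> gap w"
proof (cases "0 < P w")
  case True
  then have "0 < ratio w" unfolding ratio_def using atom_probs_pos[OF True] by simp
  then have "0 \<le> ratio w - 1 - ln (ratio w)" using ln_le_minus_one by smt
  then show ?thesis unfolding gap_def using nonneg by simp
next
  case False
  then have "P w = 0" using nonneg by (metis order_antisym not_less)
  then show ?thesis unfolding gap_def by simp
qed

lemma ln2_cond_mut_inf_eq: "ln 2 * cond_mut_inf P F G K = sum gap UNIV + 1 - (\<Sum>w\<in>UNIV. P w * ratio w)"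
proof -
  have log_term: "P w * ln (pFGK w) + P w * ln (pK w) - P w * ln (pFK w) - P w * ln (pGK w)
      = gap w + P w - P w * ratio w" for w
  proof (cases "0 < P w")
    case True
    then have "ln (ratio w) = ln (pFK w) + ln (pGK w) - ln (pFGK w) - ln (pK w)"
      unfolding ratio_def using atom_probs_pos[OF True] by (simp add: ln_div ln_mult)
    then have "P w * (ln (pFGK w) + ln (pK w) - ln (pFK w) - ln (pGK w)) = P w * (- ln (ratio w))"
      by simp
    then show ?thesis unfolding gap_def by (simp add: algebra_simps)
  next
    case False
    then have "P w = 0" using nonneg by (metis order_antisym not_less)
    then show ?thesis unfolding gap_def by simp
  qed
  have "ln 2 * cond_mut_inf P F G K = (\<Sum>w\<in>UNIV. P w * ln (pFGK w) + P w * ln (pK w)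
      - P w * ln (pFK w) - P w * ln (pGK w))"
    unfolding cond_mut_inf_def ent_eq_expectation pFK_def pGK_def pFGK_def pK_def
    by (simp add: log_def sum_distrib_left sum.distrib sum_subtractf algebra_simps)
  also have "\<dots> = sum gap UNIV + 1 - (\<Sum>w\<in>UNIV. P w * ratio w)"
    using pmf by (simp add: log_term sum.distrib sum_subtractf is_pmf_def)
  finally show ?thesis .
qed

lemma nonneg_cond_mut_inf: "0 \<le> cond_mut_inf P F G K"
proof -
  have "0 \<le> sum gap UNIV" by (simp add: gap_nonneg sum_nonneg)
  then have "0 \<le> ln 2 * cond_mut_inf P F G K"
    using ln2_cond_mut_inf_eq expected_ratio_le_1 by linarith
  then show ?thesis by (simp add: zero_le_mult_iff)
qed

context
  assumes zero: "cond_mut_inf P F G K = 0"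
begin

lemma sum_gap_eq_0: "sum gap UNIV = 0" and expected_ratio_eq_1: "(\<Sum>w\<in>UNIV. P w * ratio w) = 1"
  using ln2_cond_mut_inf_eq expected_ratio_le_1 sum_nonneg[of UNIV gap] gap_nonneg zero by auto

lemma factorization_on_support:
  assumes "0 < P w" shows "pFGK w * pK w = pFK w * pGK w"
proof -
  have "gap w = 0" using sum_gap_eq_0 gap_nonneg sum_nonneg_eq_0_iff[of UNIV gap] by auto
  then have "ratio w - 1 - ln (ratio w) = 0" unfolding gap_def using assms by simp
  moreover have "0 < ratio w" unfolding ratio_def using atom_probs_pos[OF assms] by simp
  ultimately have "ratio w = 1" using ln_eq_minus_one by force
  then show ?thesis unfolding ratio_def using atom_probs_pos[OF assms] by (simp add: field_simps)
qed

lemma rectangle_on_support: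
  assumes p1: "0 < P w1" and p2: "0 < P w2" and same_K: "K w1 = K w2"
  shows "\<exists>w. 0 < P w \<and> F w = F w1 \<and> G w = G w2 \<and> K w = K w1"
proof -
  define D where "D w1 w2 = (if K w1 = K w2 \<and> pFG_K w1 w2 = 0 then P w1 * P w2 / pK w1 else 0)" for w1 w2
  have D_nonneg: "0 \<le> D w1 w2" for w1 w2
    using nonneg atom_prob_nonneg[OF nonneg] unfolding D_def pK_def by (auto intro!: divide_nonneg_nonneg)
  have "(\<Sum>w1\<in>UNIV. \<Sum>w2\<in>UNIV. D w1 w2)
     = (\<Sum>w1\<in>UNIV. \<Sum>w2\<in>UNIV. if K w1 = K w2 then P w1 * P w2 / pK w1 else 0)
     - (\<Sum>w1\<in>UNIV. \<Sum>w2\<in>UNIV. if K w1 = K w2 \<and> pFG_K w1 w2 \<noteq> 0 then P w1 * P w2 / pK w1 else 0)"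
    unfolding D_def sum_subtractf[symmetric] by (intro sum.cong) auto
  also have "\<dots> = 0" using sum_same_K_eq_1 expected_ratio_eq expected_ratio_eq_1 by simp
  finally have "(\<Sum>w1\<in>UNIV. \<Sum>w2\<in>UNIV. D w1 w2) = 0" .
  then have "D w1 w2 = 0"
    using D_nonneg by (simp add: sum_nonneg sum_nonneg_eq_0_iff)
  moreover have "0 < P w1 * P w2 / pK w1" using p1 p2 atom_probs_pos[OF p1] by simp
  ultimately have "pFG_K w1 w2 \<noteq> 0" using same_K unfolding D_def by (auto split: if_splits)
  then obtain w where "(if F w = F w1 \<and> G w = G w2 \<and> K w = K w1 then P w else 0) \<noteq> 0"
    unfolding pFG_K_def using sum.neutral[of UNIV "\<lambda>w. if F w = F w1 \<and> G w = G w2 \<and> K w = K w1 then P w else 0"]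
    by blast
  then show ?thesis using nonneg by (auto split: if_splits simp: order_less_le)
qed

end

end

lemma cond_mut_inf_nonneg: "is_pmf P \<Longrightarrow> 0 \<le> cond_mut_inf P F G K"
  using cond_mut_inf_gibbs.nonneg_cond_mut_inf cond_mut_inf_gibbs.intro by blast

lemma cond_mut_inf_eq_0_rectangle:
  assumes "is_pmf P" "cond_mut_inf P F G K = 0" "0 < P w1" "0 < P w2" "K w1 = K w2"
  shows "\<exists>w. 0 < P w \<and> F w = F w1 \<and> G w = G w2 \<and> K w = K w1"
  using cond_mut_inf_gibbs.rectangle_on_support[of P F G K w1 w2] assms
  by (simp add: cond_mut_inf_gibbs_def)

lemma cond_mut_inf_eq_0_factorization:
  assumes "is_pmf P" "cond_mut_inf P F G K = 0" "0 < P w"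
  shows "atom_prob P (\<lambda>w. (F w, G w, K w)) w * atom_prob P K w
       = atom_prob P (\<lambda>w. (F w, K w)) w * atom_prob P (\<lambda>w. (G w, K w)) w"
  using cond_mut_inf_gibbs.factorization_on_support[of P F G K w] assms
  by (simp add: cond_mut_inf_gibbs_def cond_mut_inf_gibbs.pFK_def cond_mut_inf_gibbs.pGK_def
      cond_mut_inf_gibbs.pFGK_def cond_mut_inf_gibbs.pK_def)

lemma ent_le_ent_pair:
  assumes "is_pmf P" shows "ent P G \<le> ent P (\<lambda>w. (F w, G w))"
proof -
  have "ent P (\<lambda>w. (F w, F w, G w)) = ent P (\<lambda>w. (F w, G w))"
    by (rule ent_cong_on_support) (use assms in \<open>auto simp: is_pmf_def\<close>)
  then show ?thesis using cond_mut_inf_nonneg[OF assms, of F F G] unfolding cond_mut_inf_def by simp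
qed

lemma ent_pair_le_add:
  assumes "is_pmf P" shows "ent P (\<lambda>w. (F w, G w)) \<le> ent P F + ent P G"
proof -
  have "ent P (\<lambda>w. (F w, ())) = ent P F" "ent P (\<lambda>w. (G w, ())) = ent P G"
    "ent P (\<lambda>w. (F w, G w, ())) = ent P (\<lambda>w. (F w, G w))"
    by (rule ent_cong_on_support; use assms in \<open>auto simp: is_pmf_def\<close>)+
  then show ?thesis using cond_mut_inf_nonneg[OF assms, of F G "\<lambda>w. ()"] ent_const[OF assms, of "()"]
    unfolding cond_mut_inf_def by simp
qed

lemma cond_ent_eq_0_functional:
  assumes pmf: "is_pmf P" and zero: "cond_ent P f g = 0"
    and "0 < P w1" "0 < P w2" "g w1 = g w2"
  shows "f w1 = f w2"
proof -
  have "ent P (\<lambda>w. (f w, f w, g w)) = ent P (\<lambda>w. (f w, g w))"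
    by (rule ent_cong_on_support) (use pmf in \<open>auto simp: is_pmf_def\<close>)
  then have "cond_mut_inf P f f g = 0" using zero unfolding cond_mut_inf_def cond_ent_def by simp
  from cond_mut_inf_eq_0_rectangle[OF pmf this assms(3-5)] show ?thesis by auto
qed

text \<open>With \<open>U\<close> a function of \<open>(A,B)\<close> and \<open>V\<close> a function of \<open>(A,C)\<close>:
  \<open>H(A) \<ge> H(A|B) \<ge> H(U|B) + H(V|B,C,U,R)\<close>; the two independence hypotheses then turn the right-hand
  side into \<open>H(U) + H(V|U,R)\<close>.\<close>

lemma ent_lower_bound_two_decoders:
  assumes pmf: "is_pmf P"
    and decode_U: "\<And>w w'. 0 < P w \<Longrightarrow> 0 < P w' \<Longrightarrow> A w = A w' \<Longrightarrow> B w = B w' \<Longrightarrow> U w = U w'"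
    and decode_V: "\<And>w w'. 0 < P w \<Longrightarrow> 0 < P w' \<Longrightarrow> A w = A w' \<Longrightarrow> C w = C w' \<Longrightarrow> V w = V w'"
    and indep: "ent P (\<lambda>w. (U w, B w)) = ent P U + ent P B"
    and cond_indep: "ent P (\<lambda>w. (B w, C w, U w, V w, R w)) - ent P (\<lambda>w. (B w, C w, U w, R w))
                   = ent P (\<lambda>w. (U w, V w, R w)) - ent P (\<lambda>w. (U w, R w))"
  shows "ent P U + ent P (\<lambda>w. (U w, V w, R w)) - ent P (\<lambda>w. (U w, R w)) \<le> ent P A"
proof -
  have nonneg: "\<forall>w. 0 \<le> P w" using pmf by (simp add: is_pmf_def)
  have eq_AUB: "ent P (\<lambda>w. (A w, U w, B w)) = ent P (\<lambda>w. (A w, B w))"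
  proof (rule ent_cong_on_support[OF nonneg])
    fix w w' assume "0 < P w" "0 < P w'"
    then show "((A w, U w, B w) = (A w', U w', B w')) = ((A w, B w) = (A w', B w'))"
      using decode_U[of w w'] by auto
  qed
  have eq_RCUB: "ent P (\<lambda>w. ((R w, C w), U w, B w)) = ent P (\<lambda>w. (B w, C w, U w, R w))"
    by (rule ent_cong_on_support[OF nonneg]) auto
  have eq_all: "ent P (\<lambda>w. (A w, (R w, C w), U w, B w)) = ent P (\<lambda>w. (A w, B w, C w, U w, V w, R w))"
  proof (rule ent_cong_on_support[OF nonneg])
    fix w w' assume "0 < P w" "0 < P w'"
    then show "((A w, (R w, C w), U w, B w) = (A w', (R w', C w'), U w', B w'))
             = ((A w, B w, C w, U w, V w, R w) = (A w', B w', C w', U w', V w', R w'))"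
      using decode_V[of w w'] by auto
  qed
  show ?thesis
    using ent_pair_le_add[OF pmf, of A B] cond_mut_inf_nonneg[OF pmf, of A "\<lambda>w. (R w, C w)" "\<lambda>w. (U w, B w)"]
      ent_le_ent_pair[OF pmf, of "\<lambda>w. (B w, C w, U w, V w, R w)" A] eq_AUB eq_RCUB eq_all indep cond_indep
    unfolding cond_mut_inf_def by linarith
qed

lemma common_inf_nonneg:
  fixes P :: "'o::finite \<Rightarrow> real" and U :: "'o \<Rightarrow> 'u" and V :: "'o \<Rightarrow> 'v"
  assumes pmf: "is_pmf P" shows "0 \<le> common_inf P U V"
proof -
  let ?S = "{ent P (\<lambda>w. f (U w)) | (f :: 'u \<Rightarrow> nat) (g :: 'v \<Rightarrow> nat). \<forall>w. 0 < P w \<longrightarrow> f (U w) = g (V w)}"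
  have nonneg: "\<forall>w. 0 \<le> P w" using pmf by (simp add: is_pmf_def)
  have "ent P (\<lambda>w. (\<lambda>_. 0::nat) (U w)) \<in> ?S"
    by (intro CollectI exI[of _ "\<lambda>_. 0::nat"] exI[of _ "\<lambda>_. 0::nat"]) simp
  then have zero_in: "0 \<in> ?S" using ent_const[OF pmf, of "0::nat"] by simp
  have "e \<le> - (\<Sum>w\<in>UNIV. P w * log 2 (P w))" if "e \<in> ?S" for e
  proof -
    obtain f :: "'u \<Rightarrow> nat" where e: "e = ent P (\<lambda>w. f (U w))" using \<open>e \<in> ?S\<close> by blast
    have "P w * log 2 (P w) \<le> P w * log 2 (atom_prob P (\<lambda>w. f (U w)) w)" for w
    proof (cases "0 < P w")
      case True
      then show ?thesis using atom_prob_ge[OF nonneg, of w "\<lambda>w. f (U w)"] by (simp add: mult_left_mono)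
    next
      case False
      then have "P w = 0" using nonneg by (metis order_antisym not_less)
      then show ?thesis by simp
    qed
    then have "(\<Sum>w\<in>UNIV. P w * log 2 (P w)) \<le> (\<Sum>w\<in>UNIV. P w * log 2 (atom_prob P (\<lambda>w. f (U w)) w))"
      by (rule sum_mono)
    then show ?thesis unfolding e ent_eq_expectation by simp
  qed
  then have "bdd_above ?S" by (intro bdd_aboveI) blast
  then show ?thesis unfolding common_inf_def using cSup_upper[OF zero_in] by blast
qed

lemma common_inf_commute:
  fixes P :: "'o::finite \<Rightarrow> real" and U :: "'o \<Rightarrow> 'u" and V :: "'o \<Rightarrow> 'v"
  assumes pmf: "is_pmf P" shows "common_inf P U V = common_inf P V U"
proof -
  have eq_common: "ent P (\<lambda>w. f (U w)) = ent P (\<lambda>w. g (V w))"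
    if "\<forall>w. 0 < P w \<longrightarrow> f (U w) = g (V w)" for f g :: "_ \<Rightarrow> nat"
    by (rule ent_cong_on_support) (use pmf that in \<open>auto simp: is_pmf_def\<close>)
  have "{ent P (\<lambda>w. f (U w)) | (f :: 'u \<Rightarrow> nat) (g :: 'v \<Rightarrow> nat). \<forall>w. 0 < P w \<longrightarrow> f (U w) = g (V w)}
      = {ent P (\<lambda>w. g (V w)) | (g :: 'v \<Rightarrow> nat) (f :: 'u \<Rightarrow> nat). \<forall>w. 0 < P w \<longrightarrow> g (V w) = f (U w)}"
  proof (intro set_eqI iffI)
    fix e assume "e \<in> {ent P (\<lambda>w. f (U w)) | (f :: 'u \<Rightarrow> nat) (g :: 'v \<Rightarrow> nat). \<forall>w. 0 < P w \<longrightarrow> f (U w) = g (V w)}"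
    then obtain f :: "'u \<Rightarrow> nat" and g :: "'v \<Rightarrow> nat"
      where "e = ent P (\<lambda>w. f (U w))" and c: "\<forall>w. 0 < P w \<longrightarrow> f (U w) = g (V w)"
      by blast
    then have "e = ent P (\<lambda>w. g (V w)) \<and> (\<forall>w. 0 < P w \<longrightarrow> g (V w) = f (U w))"
      using eq_common[OF c] by auto
    then show "e \<in> {ent P (\<lambda>w. g (V w)) | (g :: 'v \<Rightarrow> nat) (f :: 'u \<Rightarrow> nat). \<forall>w. 0 < P w \<longrightarrow> g (V w) = f (U w)}"
      by blast
  next
    fix e assume "e \<in> {ent P (\<lambda>w. g (V w)) | (g :: 'v \<Rightarrow> nat) (f :: 'u \<Rightarrow> nat). \<forall>w. 0 < P w \<longrightarrow> g (V w) = f (U w)}"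
    then obtain f :: "'u \<Rightarrow> nat" and g :: "'v \<Rightarrow> nat"
      where "e = ent P (\<lambda>w. g (V w))" and c: "\<forall>w. 0 < P w \<longrightarrow> f (U w) = g (V w)"
      by force
    then have "e = ent P (\<lambda>w. f (U w)) \<and> (\<forall>w. 0 < P w \<longrightarrow> f (U w) = g (V w))"
      using eq_common[OF c] by auto
    then show "e \<in> {ent P (\<lambda>w. f (U w)) | (f :: 'u \<Rightarrow> nat) (g :: 'v \<Rightarrow> nat). \<forall>w. 0 < P w \<longrightarrow> f (U w) = g (V w)}"
      by blast
  qed
  then show ?thesis unfolding common_inf_def by simp
qed

lemma mut_inf_commute:
  assumes "is_pmf P" shows "mut_inf P U V = mut_inf P V U"
proof -
  have "ent P (\<lambda>w. (U w, V w)) = ent P (\<lambda>w. (V w, U w))"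
    by (rule ent_cong_on_support) (use assms in \<open>auto simp: is_pmf_def\<close>)
  then show ?thesis unfolding mut_inf_def by simp
qed

lemma res_inf_commute: "is_pmf P \<Longrightarrow> res_inf P U V = res_inf P V U"
  using mut_inf_commute[of P U V] common_inf_commute[of P U V] unfolding res_inf_def by linarith

lemma res_inf_le_mut_inf: "is_pmf P \<Longrightarrow> res_inf P U V \<le> mut_inf P U V"
  unfolding res_inf_def using common_inf_nonneg by simp

lemma cond_ent_swap:
  assumes "is_pmf P" shows "cond_ent P (\<lambda>w. (U w, V w)) R = cond_ent P (\<lambda>w. (V w, U w)) R"
proof -
  have "ent P (\<lambda>w. ((U w, V w), R w)) = ent P (\<lambda>w. ((V w, U w), R w))"
    by (rule ent_cong_on_support) (use assms in \<open>auto simp: is_pmf_def\<close>)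
  then show ?thesis unfolding cond_ent_def by simp
qed

lemma mut_inf_add_cond_ent:
  assumes "is_pmf P"
  shows "mut_inf P U R + cond_ent P (\<lambda>w. (U w, V w)) R
     = ent P U + ent P (\<lambda>w. (U w, V w, R w)) - ent P (\<lambda>w. (U w, R w))"
proof -
  have "ent P (\<lambda>w. ((U w, V w), R w)) = ent P (\<lambda>w. (U w, V w, R w))"
    by (rule ent_cong_on_support) (use assms in \<open>auto simp: is_pmf_def\<close>)
  then show ?thesis unfolding mut_inf_def cond_ent_def by simp
qed

section \<open>Shares produced by a kernel\<close>

lemma sum_UNIV_prod: "(\<Sum>w\<in>(UNIV :: ('s::finite \<times> 'm::finite) set). h w) = (\<Sum>s\<in>UNIV. \<Sum>m\<in>UNIV. h (s, m))"
  by (simp add: sum.cartesian_product)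

lemma joint_apply [simp]: "joint p q (s, m) = p s * q s m"
  by (simp add: joint_def)

lemma is_pmf_joint:
  assumes "is_pmf p" "\<forall>s. is_pmf (q s)" shows "is_pmf (joint p q)"
proof -
  have "sum (joint p q) UNIV = (\<Sum>s\<in>UNIV. p s * (\<Sum>m\<in>UNIV. q s m))"
    by (subst sum_UNIV_prod) (simp add: sum_distrib_left)
  also have "\<dots> = 1"
  proof -
    have "sum (q s) UNIV = 1" for s using assms(2) unfolding is_pmf_def by blast
    then show ?thesis using assms(1) unfolding is_pmf_def by simp
  qed
  finally show ?thesis using assms unfolding is_pmf_def joint_def by auto
qed

lemma joint_pos_iff:
  assumes "\<forall>s. 0 < p s" shows "(0 < joint p q (s, m)) = (0 < q s m)"
proof -
  have "0 < p s" using assms by blast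
  then show ?thesis by (simp add: zero_less_mult_iff)
qed

definition cond_marg :: "('s \<Rightarrow> 'm::finite \<Rightarrow> real) \<Rightarrow> ('m \<Rightarrow> 'b) \<Rightarrow> 's \<Rightarrow> 'b \<Rightarrow> real" where
  "cond_marg q \<phi> s b = (\<Sum>m\<in>UNIV. if \<phi> m = b then q s m else 0)"

lemma cond_marg_ge: "\<forall>m. 0 \<le> q s m \<Longrightarrow> q s m \<le> cond_marg q \<phi> s (\<phi> m)"
  unfolding cond_marg_def by (rule member_le_sum[of m UNIV "\<lambda>m'. if \<phi> m' = \<phi> m then q s m' else 0", simplified]) auto

lemma cond_marg_nonneg: "\<forall>m. 0 \<le> q s m \<Longrightarrow> 0 \<le> cond_marg q \<phi> s b"
  unfolding cond_marg_def by (intro sum_nonneg) auto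

lemma cond_marg_pos_iff:
  assumes "\<forall>m. 0 \<le> q s m" shows "(0 < cond_marg q \<phi> s b) = (\<exists>m. \<phi> m = b \<and> 0 < q s m)"
proof
  assume "0 < cond_marg q \<phi> s b"
  then obtain m where "(if \<phi> m = b then q s m else 0) \<noteq> 0"
    unfolding cond_marg_def using sum.neutral[of UNIV "\<lambda>m. if \<phi> m = b then q s m else 0"] by force
  then show "\<exists>m. \<phi> m = b \<and> 0 < q s m" using assms by (auto split: if_splits simp: order_less_le)
next
  assume "\<exists>m. \<phi> m = b \<and> 0 < q s m"
  then show "0 < cond_marg q \<phi> s b" using cond_marg_ge[of q s, OF assms] by (metis less_le_trans)
qed

lemma cond_marg_unit: "is_pmf (q s) \<Longrightarrow> cond_marg q (\<lambda>m. ()) s b = 1"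
  unfolding cond_marg_def is_pmf_def by simp

lemma cond_marg_comp:
  "cond_marg q (\<lambda>m. \<psi> (\<phi> m)) s b = (\<Sum>b'\<in>range \<phi>. if \<psi> b' = b then cond_marg q \<phi> s b' else 0)"
proof -
  have "(\<Sum>b'\<in>range \<phi>. if \<psi> b' = b then cond_marg q \<phi> s b' else 0)
      = (\<Sum>b'\<in>range \<phi>. \<Sum>m\<in>UNIV. if \<phi> m = b' then (if \<psi> b' = b then q s m else 0) else 0)"
    unfolding cond_marg_def by (intro sum.cong refl) (simp add: if_distrib cong: if_cong)
  also have "\<dots> = (\<Sum>m\<in>UNIV. \<Sum>b'\<in>range \<phi>. if \<phi> m = b' then (if \<psi> b' = b then q s m else 0) else 0)"
    by (rule sum.swap)
  also have "\<dots> = cond_marg q (\<lambda>m. \<psi> (\<phi> m)) s b"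
    unfolding cond_marg_def by (intro sum.cong refl) simp
  finally show ?thesis ..
qed

lemma sum_cond_marg: "(\<Sum>m\<in>UNIV. q s m * L (\<phi> m)) = (\<Sum>b\<in>range \<phi>. L b * cond_marg q \<phi> s b)"
proof -
  have "(\<Sum>b\<in>range \<phi>. L b * cond_marg q \<phi> s b)
      = (\<Sum>b\<in>range \<phi>. \<Sum>m\<in>UNIV. if \<phi> m = b then L b * q s m else 0)"
    unfolding cond_marg_def sum_distrib_left by (intro sum.cong refl) auto
  also have "\<dots> = (\<Sum>m\<in>UNIV. \<Sum>b\<in>range \<phi>. if \<phi> m = b then L b * q s m else 0)"
    by (rule sum.swap)
  also have "\<dots> = (\<Sum>m\<in>UNIV. q s m * L (\<phi> m))"
    by (intro sum.cong refl) simp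
  finally show ?thesis by simp
qed

lemma atom_prob_joint:
  "atom_prob (joint p q) (\<lambda>w. (\<phi> (snd w), h (fst w))) (s, m)
     = (\<Sum>s'\<in>UNIV. if h s' = h s then p s' * cond_marg q \<phi> s' (\<phi> m) else 0)"
  unfolding atom_prob_def cond_marg_def
  by (subst sum_UNIV_prod) (auto simp: sum_distrib_left intro!: sum.cong)

lemma atom_prob_joint_secret:
  assumes "\<forall>s. is_pmf (q s)"
  shows "atom_prob (joint p q) (\<lambda>w. h (fst w)) (s, m) = atom_prob p h s"
proof -
  have "sum (q s') UNIV = 1" for s' using assms unfolding is_pmf_def by blast
  then show ?thesis unfolding atom_prob_def
    by (subst sum_UNIV_prod) (intro sum.cong refl, auto simp: sum_distrib_left[symmetric])
qed

lemma atom_prob_joint_factor: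
  assumes law: "\<And>s s' b. h s = h s' \<Longrightarrow> cond_marg q \<phi> s b = cond_marg q \<phi> s' b"
  shows "atom_prob (joint p q) (\<lambda>w. (\<phi> (snd w), h (fst w))) (s, m) = atom_prob p h s * cond_marg q \<phi> s (\<phi> m)"
proof -
  have "atom_prob (joint p q) (\<lambda>w. (\<phi> (snd w), h (fst w))) (s, m)
      = (\<Sum>s'\<in>UNIV. (if h s' = h s then p s' else 0) * cond_marg q \<phi> s (\<phi> m))"
    unfolding atom_prob_joint by (intro sum.cong refl) (auto dest: law)
  then show ?thesis unfolding atom_prob_def by (simp add: sum_distrib_right)
qed

lemma ent_joint_eq:
  assumes p: "is_pmf p" and q: "\<forall>s. is_pmf (q s)"
    and law: "\<And>s s' b. h s = h s' \<Longrightarrow> cond_marg q \<phi> s b = cond_marg q \<phi> s' b"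
  shows "ent (joint p q) (\<lambda>w. (\<phi> (snd w), h (fst w)))
       = ent p h - (\<Sum>s\<in>UNIV. \<Sum>m\<in>UNIV. p s * q s m * log 2 (cond_marg q \<phi> s (\<phi> m)))"
proof -
  have p_nonneg: "\<forall>s. 0 \<le> p s" using p unfolding is_pmf_def by blast
  have q_nonneg: "\<forall>m. 0 \<le> q s m" and q_sum: "sum (q s) UNIV = 1" for s
    using q unfolding is_pmf_def by blast+
  have log_split: "p s * q s m * log 2 (atom_prob p h s * cond_marg q \<phi> s (\<phi> m))
     = p s * q s m * log 2 (atom_prob p h s) + p s * q s m * log 2 (cond_marg q \<phi> s (\<phi> m))" for s m
  proof (cases "p s * q s m = 0")
    case False
    moreover have "0 \<le> p s" "0 \<le> q s m" using p_nonneg q_nonneg[of s] by blast+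
    ultimately have "0 < p s" "0 < q s m" by (auto simp: order_less_le)
    then have "0 < atom_prob p h s" "0 < cond_marg q \<phi> s (\<phi> m)"
      using atom_prob_ge[OF p_nonneg, of s h] cond_marg_ge[where q = q and s = s and m = m and \<phi> = \<phi>, OF q_nonneg[of s]] by linarith+
    then show ?thesis by (simp add: log_mult_pos distrib_left)
  qed auto
  have secret_part: "(\<Sum>s\<in>UNIV. \<Sum>m\<in>UNIV. p s * q s m * log 2 (atom_prob p h s))
      = (\<Sum>s\<in>UNIV. p s * log 2 (atom_prob p h s))"
  proof (rule sum.cong[OF refl])
    fix s
    have "(\<Sum>m\<in>UNIV. p s * q s m * log 2 (atom_prob p h s)) = p s * log 2 (atom_prob p h s) * sum (q s) UNIV"
      by (simp add: sum_distrib_left sum_distrib_right mult_ac)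
    then show "(\<Sum>m\<in>UNIV. p s * q s m * log 2 (atom_prob p h s)) = p s * log 2 (atom_prob p h s)"
      using q_sum by simp
  qed
  have "ent (joint p q) (\<lambda>w. (\<phi> (snd w), h (fst w)))
      = - (\<Sum>s\<in>UNIV. \<Sum>m\<in>UNIV. p s * q s m * log 2 (atom_prob p h s * cond_marg q \<phi> s (\<phi> m)))"
    unfolding ent_eq_expectation by (subst sum_UNIV_prod) (simp only: atom_prob_joint_factor[OF law] joint_apply)
  also have "\<dots> = - (\<Sum>s\<in>UNIV. \<Sum>m\<in>UNIV. p s * q s m * log 2 (atom_prob p h s))
       - (\<Sum>s\<in>UNIV. \<Sum>m\<in>UNIV. p s * q s m * log 2 (cond_marg q \<phi> s (\<phi> m)))"
    unfolding log_split by (simp add: sum.distrib)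
  finally show ?thesis unfolding secret_part ent_eq_expectation by simp
qed

lemma ent_joint_secret:
  assumes "is_pmf p" "\<forall>s. is_pmf (q s)"
  shows "ent (joint p q) (\<lambda>w. h (fst w)) = ent p h"
proof -
  have unit: "cond_marg q (\<lambda>m. ()) s b = 1" for s b
    using assms(2) by (intro cond_marg_unit) blast
  have "ent (joint p q) (\<lambda>w. h (fst w)) = ent (joint p q) (\<lambda>w. ((\<lambda>m. ()) (snd w), h (fst w)))"
    using is_pmf_joint[OF assms] unfolding is_pmf_def by (intro ent_cong_on_support) auto
  also have "\<dots> = ent p h - (\<Sum>s\<in>UNIV. \<Sum>m\<in>UNIV. p s * q s m * log 2 (cond_marg q (\<lambda>m. ()) s ()))"
    by (rule ent_joint_eq[OF assms]) (simp add: unit)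
  also have "\<dots> = ent p h"
    by (simp add: unit)
  finally show ?thesis .
qed

definition decodes :: "('s \<Rightarrow> 'm \<Rightarrow> real) \<Rightarrow> ('m \<Rightarrow> 'b) \<Rightarrow> ('s \<Rightarrow> 'v) \<Rightarrow> bool" where
  "decodes q \<phi> f \<longleftrightarrow> (\<forall>s m s' m'. 0 < q s m \<longrightarrow> 0 < q s' m' \<longrightarrow> \<phi> m = \<phi> m' \<longrightarrow> f s = f s')"

definition law_factors :: "('s \<Rightarrow> 'm::finite \<Rightarrow> real) \<Rightarrow> ('m \<Rightarrow> 'b) \<Rightarrow> ('s \<Rightarrow> 'k) \<Rightarrow> bool" where
  "law_factors q \<phi> \<kappa> \<longleftrightarrow> (\<forall>s s'. \<kappa> s = \<kappa> s' \<longrightarrow> cond_marg q \<phi> s = cond_marg q \<phi> s')"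

lemma decodesD: "decodes q \<phi> f \<Longrightarrow> 0 < q s m \<Longrightarrow> 0 < q s' m' \<Longrightarrow> \<phi> m = \<phi> m' \<Longrightarrow> f s = f s'"
  unfolding decodes_def by blast

lemma decodes_swap: "decodes q (\<lambda>m. (\<phi> m, \<psi> m)) f \<Longrightarrow> decodes q (\<lambda>m. (\<psi> m, \<phi> m)) f"
  unfolding decodes_def by blast

lemma decodes_if_cond_ent_eq_0:
  assumes p: "is_pmf p" and full_support: "\<forall>s. 0 < p s" and q: "\<forall>s. is_pmf (q s)"
    and zero: "cond_ent (joint p q) (\<lambda>w. f (fst w)) (\<lambda>w. \<phi> (snd w)) = 0"
  shows "decodes q \<phi> f"
  unfolding decodes_def
proof (intro allI impI)
  fix s m s' m' assume "0 < q s m" "0 < q s' m'" "\<phi> m = \<phi> m'"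
  moreover have "0 < p s" "0 < p s'" using full_support by blast+
  ultimately show "f s = f s'"
    using cond_ent_eq_0_functional[OF is_pmf_joint[OF p q] zero, of "(s, m)" "(s', m')"]
    by (simp add: joint_pos_iff[OF full_support])
qed

text \<open>Privacy says that \<open>\<phi>(M)\<close> is independent of \<open>\<gamma>(S)\<close> given \<open>\<kappa>(S)\<close>; when \<open>(\<gamma>, \<kappa>)\<close> determines the
  secret and every secret has positive probability, this pins the conditional law of \<open>\<phi>(M)\<close> down to
  a function of \<open>\<kappa>\<close>: the factorization of the joint atoms identifies it on the support, and the
  rectangle property shows that the support itself only depends on \<open>\<kappa>\<close>.\<close>

context
  fixes p :: "'x::finite \<times> 'y::finite \<times> 'z::finite \<Rightarrow> real"
    and q :: "'x \<times> 'y \<times> 'z \<Rightarrow> 'a::finite \<times> 'b::finite \<times> 'c::finite \<Rightarrow> real"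
    and \<phi> :: "'a \<times> 'b \<times> 'c \<Rightarrow> 'v" and \<gamma> :: "'x \<times> 'y \<times> 'z \<Rightarrow> 'g" and \<kappa> :: "'x \<times> 'y \<times> 'z \<Rightarrow> 'k"
  assumes p_pmf: "is_pmf p" and full_support: "\<forall>s. 0 < p s" and q_pmf: "\<forall>s. is_pmf (q s)"
    and secret_determined: "\<And>s s'. \<gamma> s = \<gamma> s' \<Longrightarrow> \<kappa> s = \<kappa> s' \<Longrightarrow> s = s'"
    and cond_indep: "cond_mut_inf (joint p q) (\<lambda>w. \<phi> (snd w)) (\<lambda>w. \<gamma> (fst w)) (\<lambda>w. \<kappa> (fst w)) = 0"
begin

lemma cond_marg_times_atom_prob:
  assumes "0 < q s m"
  shows "cond_marg q \<phi> s (\<phi> m) * atom_prob p \<kappa> s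
       = (\<Sum>s'\<in>UNIV. if \<kappa> s' = \<kappa> s then p s' * cond_marg q \<phi> s' (\<phi> m) else 0)"
proof -
  have same_secret: "(\<gamma> s' = \<gamma> s \<and> \<kappa> s' = \<kappa> s) = (s' = s)" for s'
    using secret_determined by blast
  have atom_FGK: "atom_prob (joint p q) (\<lambda>w. (\<phi> (snd w), \<gamma> (fst w), \<kappa> (fst w))) (s, m)
      = p s * cond_marg q \<phi> s (\<phi> m)"
    using atom_prob_joint[of p q \<phi> "\<lambda>s. (\<gamma> s, \<kappa> s)" s m] by (simp add: same_secret)
  have atom_GK: "atom_prob (joint p q) (\<lambda>w. (\<gamma> (fst w), \<kappa> (fst w))) (s, m) = p s"
    using atom_prob_joint_secret[OF q_pmf, of p "\<lambda>s. (\<gamma> s, \<kappa> s)" s m]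
    by (simp add: atom_prob_def same_secret)
  have "0 < p s" using full_support by blast
  then show ?thesis
    using cond_mut_inf_eq_0_factorization[OF is_pmf_joint[OF p_pmf q_pmf] cond_indep, of "(s, m)"]
      assms atom_FGK atom_GK atom_prob_joint[of p q \<phi> \<kappa> s m] atom_prob_joint_secret[OF q_pmf, of p \<kappa> s m]
    by (simp add: zero_less_mult_iff)
qed

lemma cond_marg_support_shared:
  assumes same_\<kappa>: "\<kappa> s1 = \<kappa> s2" and m1: "0 < q s1 m1"
  shows "\<exists>m2. \<phi> m2 = \<phi> m1 \<and> 0 < q s2 m2"
proof -
  have "\<exists>m. 0 < q s2 m"
  proof (rule ccontr)
    assume "\<nexists>m. 0 < q s2 m"
    moreover have "\<forall>m. 0 \<le> q s2 m" and "sum (q s2) UNIV = 1" using q_pmf unfolding is_pmf_def by blast+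
    ultimately have "sum (q s2) UNIV = 0" by (metis antisym not_le sum.neutral)
    then show False using \<open>sum (q s2) UNIV = 1\<close> by simp
  qed
  then obtain m where "0 < q s2 m" by blast
  then have pos: "0 < joint p q (s1, m1)" "0 < joint p q (s2, m)"
    using m1 joint_pos_iff[OF full_support] by blast+
  have "\<kappa> (fst (s1, m1)) = \<kappa> (fst (s2, m))" using same_\<kappa> by simp
  from cond_mut_inf_eq_0_rectangle[OF is_pmf_joint[OF p_pmf q_pmf] cond_indep pos this]
  obtain w where w: "0 < joint p q w" "\<phi> (snd w) = \<phi> m1" "\<gamma> (fst w) = \<gamma> s2" "\<kappa> (fst w) = \<kappa> s1"
    by auto
  then have "fst w = s2" using secret_determined same_\<kappa> by simp
  moreover have "0 < q (fst w) (snd w)" using w(1) joint_pos_iff[OF full_support, of q "fst w" "snd w"] by simp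
  ultimately show ?thesis using w(2) by blast
qed

lemma law_factors_of_cond_indep: "law_factors q \<phi> \<kappa>"
  unfolding law_factors_def
proof (intro allI impI ext)
  fix s1 s2 b assume same_\<kappa>: "\<kappa> s1 = \<kappa> s2"
  have q_nonneg: "\<forall>m. 0 \<le> q s m" for s using q_pmf unfolding is_pmf_def by blast
  show "cond_marg q \<phi> s1 b = cond_marg q \<phi> s2 b"
  proof (cases "\<exists>m. \<phi> m = b \<and> 0 < q s1 m")
    case True
    then obtain m1 where m1: "\<phi> m1 = b" "0 < q s1 m1" by blast
    obtain m2 where m2: "\<phi> m2 = b" "0 < q s2 m2"
      using cond_marg_support_shared[OF same_\<kappa> m1(2)] m1(1) by blast
    have "cond_marg q \<phi> s1 b * atom_prob p \<kappa> s1 = cond_marg q \<phi> s2 b * atom_prob p \<kappa> s2"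
      using cond_marg_times_atom_prob[OF m1(2)] cond_marg_times_atom_prob[OF m2(2)]
      unfolding m1(1) m2(1) same_\<kappa> by (rule trans[OF _ sym])
    moreover have "atom_prob p \<kappa> s1 = atom_prob p \<kappa> s2" using same_\<kappa> by (simp add: atom_prob_def)
    moreover have "0 < atom_prob p \<kappa> s1"
    proof -
      have "p s1 \<le> atom_prob p \<kappa> s1" using p_pmf unfolding is_pmf_def by (intro atom_prob_ge) blast
      moreover have "0 < p s1" using full_support by blast
      ultimately show ?thesis by linarith
    qed
    ultimately show ?thesis by simp
  next
    case False
    have "\<not> (\<exists>m. \<phi> m = b \<and> 0 < q s2 m)"
    proof
      assume "\<exists>m. \<phi> m = b \<and> 0 < q s2 m"
      then obtain m where "\<phi> m = b" "0 < q s2 m" by blast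
      then show False using False cond_marg_support_shared[OF same_\<kappa>[symmetric], of m] by blast
    qed
    then have "\<not> 0 < cond_marg q \<phi> s1 b" "\<not> 0 < cond_marg q \<phi> s2 b"
      using False unfolding cond_marg_pos_iff[OF q_nonneg] by simp_all
    then show ?thesis
      using cond_marg_nonneg[of q s1 \<phi> b, OF q_nonneg] cond_marg_nonneg[of q s2 \<phi> b, OF q_nonneg]
      by linarith
  qed
qed

end

lemma law_factors_comp:
  assumes "law_factors q \<phi> \<kappa>" shows "law_factors q (\<lambda>m. \<psi> (\<phi> m)) \<kappa>"
  unfolding law_factors_def
proof (intro allI impI)
  fix s s' assume "\<kappa> s = \<kappa> s'"
  then have "cond_marg q \<phi> s = cond_marg q \<phi> s'" using assms unfolding law_factors_def by blast
  then show "cond_marg q (\<lambda>m. \<psi> (\<phi> m)) s = cond_marg q (\<lambda>m. \<psi> (\<phi> m)) s'"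
    by (intro ext) (simp only: cond_marg_comp)
qed

lemma law_factors_swap: "law_factors q (\<lambda>m. (\<phi> m, \<psi> m)) \<kappa> \<Longrightarrow> law_factors q (\<lambda>m. (\<psi> m, \<phi> m)) \<kappa>"
  by (drule law_factors_comp[where \<psi> = "\<lambda>(b, c). (c, b)"]) simp

lemma law_factors_const:
  assumes "law_factors q \<phi> \<kappa>\<^sub>1" "law_factors q \<phi> \<kappa>\<^sub>2"
    and product: "\<And>s s'. \<exists>t. \<kappa>\<^sub>1 t = \<kappa>\<^sub>1 s \<and> \<kappa>\<^sub>2 t = \<kappa>\<^sub>2 s'"
  shows "law_factors q \<phi> (\<lambda>_. ())"
  unfolding law_factors_def
proof (intro allI impI)
  fix s s'
  obtain t where "\<kappa>\<^sub>1 t = \<kappa>\<^sub>1 s" "\<kappa>\<^sub>2 t = \<kappa>\<^sub>2 s'" using product by blast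
  then show "cond_marg q \<phi> s = cond_marg q \<phi> s'"
    using assms(1,2) unfolding law_factors_def by metis
qed

lemma ent_share_eq:
  assumes p: "is_pmf p" and q: "\<forall>s. is_pmf (q s)" and law: "law_factors q \<phi> (\<lambda>_. ())"
  shows "ent (joint p q) (\<lambda>w. \<phi> (snd w)) = - (\<Sum>b\<in>range \<phi>. cond_marg q \<phi> s\<^sub>0 b * log 2 (cond_marg q \<phi> s\<^sub>0 b))"
proof -
  have same_law: "cond_marg q \<phi> s = cond_marg q \<phi> s\<^sub>0" for s
    using law unfolding law_factors_def by blast
  have nonneg: "\<forall>w. 0 \<le> joint p q w" using is_pmf_joint[OF p q] unfolding is_pmf_def by blast
  have "ent (joint p q) (\<lambda>w. \<phi> (snd w)) = ent (joint p q) (\<lambda>w. (\<phi> (snd w), (\<lambda>s. ()) (fst w)))"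
    by (rule ent_cong_on_support[OF nonneg]) simp
  also have "\<dots> = ent p (\<lambda>s. ()) - (\<Sum>s\<in>UNIV. \<Sum>m\<in>UNIV. p s * q s m * log 2 (cond_marg q \<phi> s (\<phi> m)))"
    by (rule ent_joint_eq[OF p q]) (metis same_law)
  also have "(\<Sum>s\<in>UNIV. \<Sum>m\<in>UNIV. p s * q s m * log 2 (cond_marg q \<phi> s (\<phi> m)))
      = (\<Sum>s\<in>UNIV. p s * (\<Sum>b\<in>range \<phi>. cond_marg q \<phi> s\<^sub>0 b * log 2 (cond_marg q \<phi> s\<^sub>0 b)))"
  proof (rule sum.cong[OF refl])
    fix s
    have "(\<Sum>m\<in>UNIV. p s * q s m * log 2 (cond_marg q \<phi> s (\<phi> m)))
        = p s * (\<Sum>m\<in>UNIV. q s m * log 2 (cond_marg q \<phi> s\<^sub>0 (\<phi> m)))"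
      by (simp add: sum_distrib_left mult.assoc same_law[of s])
    also have "\<dots> = p s * (\<Sum>b\<in>range \<phi>. cond_marg q \<phi> s\<^sub>0 b * log 2 (cond_marg q \<phi> s\<^sub>0 b))"
      by (simp add: sum_cond_marg[where L = "\<lambda>b. log 2 (cond_marg q \<phi> s\<^sub>0 b)"] same_law[of s] mult.commute)
    finally show "(\<Sum>m\<in>UNIV. p s * q s m * log 2 (cond_marg q \<phi> s (\<phi> m)))
        = p s * (\<Sum>b\<in>range \<phi>. cond_marg q \<phi> s\<^sub>0 b * log 2 (cond_marg q \<phi> s\<^sub>0 b))" .
  qed
  also have "\<dots> = (\<Sum>b\<in>range \<phi>. cond_marg q \<phi> s\<^sub>0 b * log 2 (cond_marg q \<phi> s\<^sub>0 b))"
    using p unfolding is_pmf_def by (simp add: sum_distrib_right[symmetric])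
  finally show ?thesis using ent_const[OF p] by simp
qed

lemma ent_share_indep:
  assumes "is_pmf p" "is_pmf p'" "\<forall>s. is_pmf (q s)" "law_factors q \<phi> (\<lambda>_. ())"
  shows "ent (joint p q) (\<lambda>w. \<phi> (snd w)) = ent (joint p' q) (\<lambda>w. \<phi> (snd w))"
  using ent_share_eq[OF assms(1,3,4)] ent_share_eq[OF assms(2,3,4)] by simp

lemma ent_share_secret_diff:
  assumes p: "is_pmf p" and q: "\<forall>s. is_pmf (q s)" and law: "law_factors q \<phi> \<kappa>"
    and h\<^sub>1: "\<And>s s'. h\<^sub>1 s = h\<^sub>1 s' \<Longrightarrow> \<kappa> s = \<kappa> s'" and h\<^sub>2: "\<And>s s'. h\<^sub>2 s = h\<^sub>2 s' \<Longrightarrow> \<kappa> s = \<kappa> s'"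
  shows "ent (joint p q) (\<lambda>w. (\<phi> (snd w), h\<^sub>1 (fst w))) - ent (joint p q) (\<lambda>w. (\<phi> (snd w), h\<^sub>2 (fst w)))
       = ent p h\<^sub>1 - ent p h\<^sub>2"
proof -
  have same_law: "cond_marg q \<phi> s b = cond_marg q \<phi> s' b" if "\<kappa> s = \<kappa> s'" for s s' b
    using law that unfolding law_factors_def by metis
  have "ent (joint p q) (\<lambda>w. (\<phi> (snd w), h\<^sub>1 (fst w)))
      = ent p h\<^sub>1 - (\<Sum>s\<in>UNIV. \<Sum>m\<in>UNIV. p s * q s m * log 2 (cond_marg q \<phi> s (\<phi> m)))"
    "ent (joint p q) (\<lambda>w. (\<phi> (snd w), h\<^sub>2 (fst w)))
      = ent p h\<^sub>2 - (\<Sum>s\<in>UNIV. \<Sum>m\<in>UNIV. p s * q s m * log 2 (cond_marg q \<phi> s (\<phi> m)))"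
    by (rule ent_joint_eq[OF p q]; metis h\<^sub>1 h\<^sub>2 same_law)+
  then show ?thesis by simp
qed

lemma mut_inf_add_cond_ent_le_ent_share:
  assumes p: "is_pmf p" and q: "\<forall>s. is_pmf (q s)"
    and decode_u: "decodes q (\<lambda>m. (\<phi>\<^sub>A m, \<phi>\<^sub>B m)) u"
    and decode_v: "decodes q (\<lambda>m. (\<phi>\<^sub>A m, \<phi>\<^sub>C m)) v"
    and law_B: "law_factors q \<phi>\<^sub>B (\<lambda>_. ())"
    and law_BC: "law_factors q (\<lambda>m. (\<phi>\<^sub>B m, \<phi>\<^sub>C m)) r"
  shows "mut_inf p u r + cond_ent p (\<lambda>s. (u s, v s)) r \<le> ent (joint p q) (\<lambda>w. \<phi>\<^sub>A (snd w))"
proof -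
  define P where "P = joint p q"
  have P_pmf: "is_pmf P" unfolding P_def by (rule is_pmf_joint[OF p q])
  have nonneg: "\<forall>w. 0 \<le> P w" using P_pmf unfolding is_pmf_def by blast
  have q_pos: "0 < q (fst w) (snd w)" if "0 < P w" for w
  proof -
    have "0 \<le> p (fst w)" using p unfolding is_pmf_def by blast
    moreover have "0 < p (fst w) * q (fst w) (snd w)" using that unfolding P_def joint_def by (simp add: case_prod_beta)
    ultimately show ?thesis by (simp add: zero_less_mult_iff)
  qed
  have secret: "ent P (\<lambda>w. h (fst w)) = ent p h" for h :: "_ \<Rightarrow> 'v"
    unfolding P_def by (rule ent_joint_secret[OF p q])
  have reorder: "ent P (\<lambda>w. (u (fst w), \<phi>\<^sub>B (snd w))) = ent P (\<lambda>w. (\<phi>\<^sub>B (snd w), u (fst w)))"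
    "ent P (\<lambda>w. \<phi>\<^sub>B (snd w)) = ent P (\<lambda>w. (\<phi>\<^sub>B (snd w), (\<lambda>s. ()) (fst w)))"
    "ent P (\<lambda>w. (\<phi>\<^sub>B (snd w), \<phi>\<^sub>C (snd w), u (fst w), v (fst w), r (fst w)))
       = ent P (\<lambda>w. ((\<lambda>m. (\<phi>\<^sub>B m, \<phi>\<^sub>C m)) (snd w), (\<lambda>s. (u s, v s, r s)) (fst w)))"
    "ent P (\<lambda>w. (\<phi>\<^sub>B (snd w), \<phi>\<^sub>C (snd w), u (fst w), r (fst w)))
       = ent P (\<lambda>w. ((\<lambda>m. (\<phi>\<^sub>B m, \<phi>\<^sub>C m)) (snd w), (\<lambda>s. (u s, r s)) (fst w)))"
    by (rule ent_cong_on_support[OF nonneg]; auto)+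
  have diffs: "ent P (\<lambda>w. (\<phi>\<^sub>B (snd w), u (fst w))) - ent P (\<lambda>w. (\<phi>\<^sub>B (snd w), (\<lambda>s. ()) (fst w)))
      = ent p u - ent p (\<lambda>s. ())"
    "ent P (\<lambda>w. ((\<lambda>m. (\<phi>\<^sub>B m, \<phi>\<^sub>C m)) (snd w), (\<lambda>s. (u s, v s, r s)) (fst w)))
       - ent P (\<lambda>w. ((\<lambda>m. (\<phi>\<^sub>B m, \<phi>\<^sub>C m)) (snd w), (\<lambda>s. (u s, r s)) (fst w)))
      = ent p (\<lambda>s. (u s, v s, r s)) - ent p (\<lambda>s. (u s, r s))"
    unfolding P_def by (rule ent_share_secret_diff[OF p q law_B], simp, simp,
        rule ent_share_secret_diff[OF p q law_BC], simp, simp)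
  have indep: "ent P (\<lambda>w. (u (fst w), \<phi>\<^sub>B (snd w))) = ent P (\<lambda>w. u (fst w)) + ent P (\<lambda>w. \<phi>\<^sub>B (snd w))"
    using reorder(1,2) diffs(1) secret[of u] ent_const[OF p, of "()"] by linarith
  have cond_indep:
    "ent P (\<lambda>w. (\<phi>\<^sub>B (snd w), \<phi>\<^sub>C (snd w), u (fst w), v (fst w), r (fst w)))
       - ent P (\<lambda>w. (\<phi>\<^sub>B (snd w), \<phi>\<^sub>C (snd w), u (fst w), r (fst w)))
     = ent P (\<lambda>w. (u (fst w), v (fst w), r (fst w))) - ent P (\<lambda>w. (u (fst w), r (fst w)))"
    using reorder(3,4) diffs(2) secret[of "\<lambda>s. (u s, v s, r s)"] secret[of "\<lambda>s. (u s, r s)"] by linarith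
  have "ent P (\<lambda>w. u (fst w)) + ent P (\<lambda>w. (u (fst w), v (fst w), r (fst w)))
      - ent P (\<lambda>w. (u (fst w), r (fst w))) \<le> ent P (\<lambda>w. \<phi>\<^sub>A (snd w))"
  proof (rule ent_lower_bound_two_decoders[OF P_pmf _ _ indep cond_indep])
    fix w w' assume "0 < P w" "0 < P w'" "\<phi>\<^sub>A (snd w) = \<phi>\<^sub>A (snd w')" "\<phi>\<^sub>B (snd w) = \<phi>\<^sub>B (snd w')"
    then show "u (fst w) = u (fst w')" by (intro decodesD[OF decode_u q_pos q_pos]) simp_all
  next
    fix w w' assume "0 < P w" "0 < P w'" "\<phi>\<^sub>A (snd w) = \<phi>\<^sub>A (snd w')" "\<phi>\<^sub>C (snd w) = \<phi>\<^sub>C (snd w')"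
    then show "v (fst w) = v (fst w')" by (intro decodesD[OF decode_v q_pos q_pos]) simp_all
  qed
  then show ?thesis
    using secret[of u] secret[of "\<lambda>s. (u s, v s, r s)"] secret[of "\<lambda>s. (u s, r s)"]
      mut_inf_add_cond_ent[OF p, of u r v] unfolding P_def by simp
qed

lemma res_inf_add_cond_ent_le_ent_share:
  assumes "is_pmf p" "is_pmf p'" "\<forall>s. is_pmf (q s)"
    and "decodes q (\<lambda>m. (\<phi>\<^sub>A m, \<phi>\<^sub>B m)) u" "decodes q (\<lambda>m. (\<phi>\<^sub>A m, \<phi>\<^sub>C m)) v"
    and "law_factors q \<phi>\<^sub>A (\<lambda>_. ())" "law_factors q \<phi>\<^sub>B (\<lambda>_. ())" "law_factors q (\<lambda>m. (\<phi>\<^sub>B m, \<phi>\<^sub>C m)) r"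
  shows "res_inf p' u r + cond_ent p' (\<lambda>s. (u s, v s)) r \<le> ent (joint p q) (\<lambda>w. \<phi>\<^sub>A (snd w))"
  using res_inf_le_mut_inf[OF assms(2), of u r] ent_share_indep[OF assms(1-3,6)]
    mut_inf_add_cond_ent_le_ent_share[OF assms(2-5,7,8)] by linarith

section \<open>Correlated multi-secret sharing\<close>

context
  fixes p :: "'x::finite \<times> 'y::finite \<times> 'z::finite \<Rightarrow> real"
    and q :: "'x \<times> 'y \<times> 'z \<Rightarrow> 'a::finite \<times> 'b::finite \<times> 'c::finite \<Rightarrow> real"
  assumes p_pmf: "is_pmf p" and full_support: "\<forall>t. 0 < p t" and scheme: "is_CMSS p q"
begin

lemma CMSS_kernel_pmf: "\<forall>s. is_pmf (q s)"
  using scheme unfolding is_CMSS_def by blast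

lemma CMSS_in_coordinates:
  "cond_ent (joint p q) (\<lambda>w. pX (fst w)) (\<lambda>w. (fst (snd w), snd (snd (snd w)))) = 0"
  "cond_ent (joint p q) (\<lambda>w. pY (fst w)) (\<lambda>w. (fst (snd w), fst (snd (snd w)))) = 0"
  "cond_ent (joint p q) (\<lambda>w. pZ (fst w)) (\<lambda>w. (fst (snd (snd w)), snd (snd (snd w)))) = 0"
  "cond_mut_inf (joint p q) (\<lambda>w. (fst (snd w), snd (snd (snd w)))) (\<lambda>w. (pY (fst w), pZ (fst w))) (\<lambda>w. pX (fst w)) = 0"
  "cond_mut_inf (joint p q) (\<lambda>w. (fst (snd w), fst (snd (snd w)))) (\<lambda>w. (pX (fst w), pZ (fst w))) (\<lambda>w. pY (fst w)) = 0"
  "cond_mut_inf (joint p q) (\<lambda>w. (fst (snd (snd w)), snd (snd (snd w)))) (\<lambda>w. (pX (fst w), pY (fst w))) (\<lambda>w. pZ (fst w)) = 0"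
proof -
  have coordinates: "sX = (\<lambda>w. pX (fst w))" "sY = (\<lambda>w. pY (fst w))" "sZ = (\<lambda>w. pZ (fst w))"
    "m12 = (\<lambda>w. fst (snd w))" "m23 = (\<lambda>w. fst (snd (snd w)))" "m31 = (\<lambda>w. snd (snd (snd w)))"
    by (simp_all add: fun_eq_iff sX_def sY_def sZ_def pX_def pY_def pZ_def m12_def m23_def m31_def)
  from scheme show
    "cond_ent (joint p q) (\<lambda>w. pX (fst w)) (\<lambda>w. (fst (snd w), snd (snd (snd w)))) = 0"
    "cond_ent (joint p q) (\<lambda>w. pY (fst w)) (\<lambda>w. (fst (snd w), fst (snd (snd w)))) = 0"
    "cond_ent (joint p q) (\<lambda>w. pZ (fst w)) (\<lambda>w. (fst (snd (snd w)), snd (snd (snd w)))) = 0"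
    "cond_mut_inf (joint p q) (\<lambda>w. (fst (snd w), snd (snd (snd w)))) (\<lambda>w. (pY (fst w), pZ (fst w))) (\<lambda>w. pX (fst w)) = 0"
    "cond_mut_inf (joint p q) (\<lambda>w. (fst (snd w), fst (snd (snd w)))) (\<lambda>w. (pX (fst w), pZ (fst w))) (\<lambda>w. pY (fst w)) = 0"
    "cond_mut_inf (joint p q) (\<lambda>w. (fst (snd (snd w)), snd (snd (snd w)))) (\<lambda>w. (pX (fst w), pY (fst w))) (\<lambda>w. pZ (fst w)) = 0"
    unfolding is_CMSS_def Let_def coordinates by blast+
qed

lemma CMSS_decodes:
  "decodes q (\<lambda>m. (fst m, snd (snd m))) pX"
  "decodes q (\<lambda>m. (fst m, fst (snd m))) pY"
  "decodes q (\<lambda>m. (fst (snd m), snd (snd m))) pZ"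
  by (rule decodes_if_cond_ent_eq_0[OF p_pmf full_support CMSS_kernel_pmf], rule CMSS_in_coordinates)+

lemma CMSS_pair_laws:
  "law_factors q (\<lambda>m. (fst m, snd (snd m))) pX"
  "law_factors q (\<lambda>m. (fst m, fst (snd m))) pY"
  "law_factors q (\<lambda>m. (fst (snd m), snd (snd m))) pZ"
proof -
  have secrets: "(pY s, pZ s) = (pY s', pZ s') \<Longrightarrow> pX s = pX s' \<Longrightarrow> s = s'"
    "(pX s, pZ s) = (pX s', pZ s') \<Longrightarrow> pY s = pY s' \<Longrightarrow> s = s'"
    "(pX s, pY s) = (pX s', pY s') \<Longrightarrow> pZ s = pZ s' \<Longrightarrow> s = s'" for s s'
    by (auto simp: pX_def pY_def pZ_def prod_eq_iff)
  show "law_factors q (\<lambda>m. (fst m, snd (snd m))) pX"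
    by (rule law_factors_of_cond_indep[where \<gamma> = "\<lambda>s. (pY s, pZ s)",
          OF p_pmf full_support CMSS_kernel_pmf secrets(1) CMSS_in_coordinates(4)])
  show "law_factors q (\<lambda>m. (fst m, fst (snd m))) pY"
    by (rule law_factors_of_cond_indep[where \<gamma> = "\<lambda>s. (pX s, pZ s)",
          OF p_pmf full_support CMSS_kernel_pmf secrets(2) CMSS_in_coordinates(5)])
  show "law_factors q (\<lambda>m. (fst (snd m), snd (snd m))) pZ"
    by (rule law_factors_of_cond_indep[where \<gamma> = "\<lambda>s. (pX s, pY s)",
          OF p_pmf full_support CMSS_kernel_pmf secrets(3) CMSS_in_coordinates(6)])
qed

lemma CMSS_share_laws:
  "law_factors q fst (\<lambda>_. ())"
  "law_factors q (\<lambda>m. fst (snd m)) (\<lambda>_. ())"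
  "law_factors q (\<lambda>m. snd (snd m)) (\<lambda>_. ())"
proof -
  have laws: "law_factors q fst pX" "law_factors q fst pY"
    "law_factors q (\<lambda>m. fst (snd m)) pY" "law_factors q (\<lambda>m. fst (snd m)) pZ"
    "law_factors q (\<lambda>m. snd (snd m)) pX" "law_factors q (\<lambda>m. snd (snd m)) pZ"
    using law_factors_comp[OF CMSS_pair_laws(1), of fst] law_factors_comp[OF CMSS_pair_laws(2), of fst]
      law_factors_comp[OF CMSS_pair_laws(2), of snd] law_factors_comp[OF CMSS_pair_laws(3), of fst]
      law_factors_comp[OF CMSS_pair_laws(1), of snd] law_factors_comp[OF CMSS_pair_laws(3), of snd]
    by simp_all
  have products: "\<exists>t. pX t = pX s \<and> pY t = pY s'" "\<exists>t. pY t = pY s \<and> pZ t = pZ s'"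
    "\<exists>t. pX t = pX s \<and> pZ t = pZ s'" for s s' :: "'x \<times> 'y \<times> 'z"
    by (auto simp: pX_def pY_def pZ_def)
  show "law_factors q fst (\<lambda>_. ())"
    by (rule law_factors_const[OF laws(1,2) products(1)])
  show "law_factors q (\<lambda>m. fst (snd m)) (\<lambda>_. ())"
    by (rule law_factors_const[OF laws(3,4) products(2)])
  show "law_factors q (\<lambda>m. snd (snd m)) (\<lambda>_. ())"
    by (rule law_factors_const[OF laws(5,6) products(3)])
qed

lemma CMSS_share_bounds:
  fixes p' :: "'x \<times> 'y \<times> 'z \<Rightarrow> real"
  assumes p': "is_pmf p'"
  shows "res_inf p' pX pZ + cond_ent p' (\<lambda>t. (pX t, pY t)) pZ \<le> ent (joint p q) m12"
    and "res_inf p' pY pZ + cond_ent p' (\<lambda>t. (pX t, pY t)) pZ \<le> ent (joint p q) m12"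
    and "res_inf p' pX pZ + cond_ent p' (\<lambda>t. (pY t, pZ t)) pX \<le> ent (joint p q) m23"
    and "res_inf p' pX pY + cond_ent p' (\<lambda>t. (pY t, pZ t)) pX \<le> ent (joint p q) m23"
    and "res_inf p' pY pZ + cond_ent p' (\<lambda>t. (pX t, pZ t)) pY \<le> ent (joint p q) m31"
    and "res_inf p' pX pY + cond_ent p' (\<lambda>t. (pX t, pZ t)) pY \<le> ent (joint p q) m31"
proof -
  note bound = res_inf_add_cond_ent_le_ent_share[OF p_pmf p' CMSS_kernel_pmf]
  note facts = CMSS_decodes CMSS_decodes[THEN decodes_swap]
    CMSS_pair_laws CMSS_pair_laws[THEN law_factors_swap] CMSS_share_laws
  have shares: "m12 = (\<lambda>w. fst (snd w))" "m23 = (\<lambda>w. fst (snd (snd w)))" "m31 = (\<lambda>w. snd (snd (snd w)))"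
    by (simp_all add: fun_eq_iff m12_def m23_def m31_def)
  (* Four instances match the stated bounds only up to the symmetry of RI and the order of the pair. *)
  have "res_inf p' pY pZ + cond_ent p' (\<lambda>t. (pY t, pX t)) pZ \<le> ent (joint p q) (\<lambda>w. fst (snd w))"
    "res_inf p' pZ pX + cond_ent p' (\<lambda>t. (pZ t, pY t)) pX \<le> ent (joint p q) (\<lambda>w. fst (snd (snd w)))"
    "res_inf p' pY pX + cond_ent p' (\<lambda>t. (pY t, pZ t)) pX \<le> ent (joint p q) (\<lambda>w. fst (snd (snd w)))"
    "res_inf p' pZ pY + cond_ent p' (\<lambda>t. (pZ t, pX t)) pY \<le> ent (joint p q) (\<lambda>w. snd (snd (snd w)))"
    by (rule bound; rule facts)+
  then show "res_inf p' pY pZ + cond_ent p' (\<lambda>t. (pX t, pY t)) pZ \<le> ent (joint p q) m12"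
    "res_inf p' pX pZ + cond_ent p' (\<lambda>t. (pY t, pZ t)) pX \<le> ent (joint p q) m23"
    "res_inf p' pX pY + cond_ent p' (\<lambda>t. (pY t, pZ t)) pX \<le> ent (joint p q) m23"
    "res_inf p' pY pZ + cond_ent p' (\<lambda>t. (pX t, pZ t)) pY \<le> ent (joint p q) m31"
    unfolding shares res_inf_commute[OF p', of pX] res_inf_commute[OF p', of pY pZ]
      cond_ent_swap[OF p', of pX pY] cond_ent_swap[OF p', of pY pZ] cond_ent_swap[OF p', of pX pZ]
    by simp_all
  show "res_inf p' pX pZ + cond_ent p' (\<lambda>t. (pX t, pY t)) pZ \<le> ent (joint p q) m12"
    "res_inf p' pX pY + cond_ent p' (\<lambda>t. (pX t, pZ t)) pY \<le> ent (joint p q) m31"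
    unfolding shares by (rule bound; rule facts)+
qed

end

theorem theorem11:
  fixes p :: "'x::finite \<times> 'y::finite \<times> 'z::finite \<Rightarrow> real"
    and q :: "'x \<times> 'y \<times> 'z \<Rightarrow> 'a::finite \<times> 'b::finite \<times> 'c::finite \<Rightarrow> real"
  assumes p_pmf: "is_pmf p"
    and full_support: "\<forall>t. 0 < p t"
    and scheme: "is_CMSS p q"
  shows
   "(\<forall>p' :: 'x \<times> 'y \<times> 'z \<Rightarrow> real. is_pmf p' \<and> char_graph_connected (margXY p') \<longrightarrow>
        ent (joint p q) m12 \<ge> res_inf p' pX pZ + cond_ent p' (\<lambda>t. (pX t, pY t)) pZ \<and>
        ent (joint p q) m12 \<ge> res_inf p' pY pZ + cond_ent p' (\<lambda>t. (pX t, pY t)) pZ) \<and>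
    (\<forall>p' :: 'x \<times> 'y \<times> 'z \<Rightarrow> real. is_pmf p' \<and> char_graph_connected (margYZ p') \<longrightarrow>
        ent (joint p q) m23 \<ge> res_inf p' pX pZ + cond_ent p' (\<lambda>t. (pY t, pZ t)) pX \<and>
        ent (joint p q) m23 \<ge> res_inf p' pX pY + cond_ent p' (\<lambda>t. (pY t, pZ t)) pX) \<and>
    (\<forall>p' :: 'x \<times> 'y \<times> 'z \<Rightarrow> real. is_pmf p' \<and> char_graph_connected (margXZ p') \<longrightarrow>
        ent (joint p q) m31 \<ge> res_inf p' pY pZ + cond_ent p' (\<lambda>t. (pX t, pZ t)) pY \<and>
        ent (joint p q) m31 \<ge> res_inf p' pX pY + cond_ent p' (\<lambda>t. (pX t, pZ t)) pY)"
  using CMSS_share_bounds[OF p_pmf full_support scheme]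
  by (intro conjI allI impI) (elim conjE; simp)+

end
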